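(* Let $\Lambda$ be a lattice of rank $s$ with basis $\mathcal V=(v_1,\ldots,v_s)$, and let $\bar a=(a_1,\ldots,a_t)\in(\mathcal F^0(\Lambda,\bar K))^t$. The bijection $\mathrm{Char}(\Lambda,\bar K^\times)\to(\bar K^\times)^s$, $g^\vee\mapsto(g^\vee(v_1),\ldots,g^\vee(v_s))$, restricts to a bijection from the set of $\bar a$-harmonic characters of $\Lambda$ onto $\Sigma_{\bar a,\mathcal V}$. Moreover, for every $\bar n=(n_1,\ldots,n_s)$ with all $n_i$ positive integers coprime to $p$, there are bijections $$\Sigma_{\bar a,\mathcal V}\cap\mu_{\bar n}\ \cong\ \{\bar a_*\text{-harmonic characters of }G_{\bar n,\mathcal V}\}\ \cong\ V(\bar a_* ),$$ and consequently $d(\bar a,\Lambda_{\bar n,\mathcal V})=\mathrm{card}\,V(\bar a_* )=\mathrm{card}\,(\Sigma_{\bar a,\mathcal V}\cap\mu_{\bar n})$.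
   Context: $K=\mathrm{GF}(p^r)$, $\bar K$ an algebraic closure. A lattice is a free abelian group of finite rank. For an abelian group $G$, $\mathcal F(G,\bar K)$ (resp. $\mathcal F^0(G,\bar K)$) is the space of all (resp. finitely supported) functions $G\to\bar K$; $(f*a)(g)=\sum_h f(h)a(g-h)$, $\Delta_af=f*a$. $\mathrm{Char}(\Lambda,\bar K^\times)$ is the set of homomorphisms $\Lambda\to\bar K^\times$; a function or character $f$ is $\bar a$-harmonic if $f*a_j=0$ for all $j$. The symbol of $a\in\mathcal F^0(\Lambda,\bar K)$ is the Laurent polynomial $\sigma_{a,\mathcal V}=\sum_{v=\sum_i\alpha_iv_i\in\Lambda}a(v)x_1^{-\alpha_1}\cdots x_s^{-\alpha_s}$, and $\Sigma_{\bar a,\mathcal V}=\{\xi\in(\bar K^\times)^s:\sigma_{a_j,\mathcal V}(\xi)=0,\ j=1,\ldots,t\}$. $\mu_{\bar n}=\{\xi\in(\bar K^\times)^s:\xi_i^{n_i}=1\ \forall i\}$. $\Lambda_{\bar n,\mathcal V}=\sum_i n_i\mathbb Z v_i$, $G_{\bar n,\mathcal V}=\Lambda/\Lambda_{\bar n,\mathcal V}$, $\pi:\Lambda\to G_{\bar n,\mathcal V}$ the projection, and $(a_j)_*\in\mathcal F(G_{\bar n,\mathcal V},\bar K)$, $(a_j)_*(c)=\sum_{v\in\pi^{-1}(c)}a_j(v)$; $\bar a_*=((a_1)_*,\ldots,(a_t)_* )$. For $G=G_{\bar n,\mathcal V}$, $G^\vee$ is the group of characters $G\to\bar K^\times$,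 $\hat b(g^\vee)=\sum_{g\in G}b(g)g^\vee(g)$, and $V(\bar a_* )=\{g^\vee\in G^\vee:\widehat{(a_j)_*}(g^\vee)=0\ \forall j\}$. For a finite-index sublattice $\Lambda'$, $d(\bar a,\Lambda')=\dim\bigcap_j\ker\big(\Delta_{a_j}|_{\mathcal F_{\Lambda'}(\Lambda,\bar K)}\big)$, where $\mathcal F_{\Lambda'}(\Lambda,\bar K)$ is the space of $\Lambda'$-periodic functions. *)

theory Defs
  imports "HOL-Computational_Algebra.Polynomial" "HOL-Library.Function_Algebras"
          "HOL-Library.FuncSet"
begin

text \<open>An algebraic closure of GF(p^r) is (up to isomorphism) exactly an algebraically closed
  field of characteristic p all of whose elements are algebraic over the prime field.\<close>
definition alg_closure_of_Fp :: "nat \<Rightarrow> 'k::field itself \<Rightarrow> bool" where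
  "alg_closure_of_Fp p _ \<longleftrightarrow>
     prime p \<and> CHAR('k) = p \<and>
     (\<forall>q::'k poly. degree q > 0 \<longrightarrow> (\<exists>x. poly q x = 0)) \<and>
     (\<forall>x::'k. \<exists>q::'k poly. q \<noteq> 0 \<and> (\<forall>i. coeff q i \<in> range of_nat) \<and> poly q x = 0)"

definition zsmul :: "int \<Rightarrow> 'a::ab_group_add \<Rightarrow> 'a" where
  "zsmul k x = (if 0 \<le> k then (\<Sum>_<nat k. x) else - (\<Sum>_<nat (-k). x))"

definition is_lattice_basis :: "nat \<Rightarrow> (nat \<Rightarrow> 'l::ab_group_add) \<Rightarrow> bool" where
  "is_lattice_basis s v \<longleftrightarrow>
     (\<forall>x. \<exists>!\<alpha>::nat \<Rightarrow> int. (\<forall>i\<ge>s. \<alpha> i = 0) \<and> x = (\<Sum>i<s. zsmul (\<alpha> i) (v i)))"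

definition coords :: "nat \<Rightarrow> (nat \<Rightarrow> 'l::ab_group_add) \<Rightarrow> 'l \<Rightarrow> nat \<Rightarrow> int" where
  "coords s v x = (THE \<alpha>. (\<forall>i\<ge>s. \<alpha> i = 0) \<and> x = (\<Sum>i<s. zsmul (\<alpha> i) (v i)))"

definition fin_supp :: "('l \<Rightarrow> 'k::zero) \<Rightarrow> bool" where
  "fin_supp a \<longleftrightarrow> finite {x. a x \<noteq> 0}"

definition conv :: "('l::ab_group_add \<Rightarrow> 'k::comm_ring) \<Rightarrow> ('l \<Rightarrow> 'k) \<Rightarrow> 'l \<Rightarrow> 'k" where
  "conv f a g = (\<Sum>h\<in>{h. a (g - h) \<noteq> 0}. f h * a (g - h))"

definition harmonic :: "('l::ab_group_add \<Rightarrow> 'k::comm_ring) list \<Rightarrow> ('l \<Rightarrow> 'k) \<Rightarrow> bool" where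
  "harmonic as f \<longleftrightarrow> (\<forall>a\<in>set as. conv f a = 0)"

definition is_char :: "('l::ab_group_add \<Rightarrow> 'k::field) \<Rightarrow> bool" where
  "is_char \<chi> \<longleftrightarrow> (\<forall>x y. \<chi> (x + y) = \<chi> x * \<chi> y) \<and> (\<forall>x. \<chi> x \<noteq> 0)"

text \<open>Points of \<open>(K\<^sup>\<times>)\<^sup>s\<close>, represented as functions on \<open>nat\<close> equal to 1 from index s on.\<close>
definition torus :: "nat \<Rightarrow> (nat \<Rightarrow> 'k::field) set" where
  "torus s = {\<xi>. (\<forall>i<s. \<xi> i \<noteq> 0) \<and> (\<forall>i\<ge>s. \<xi> i = 1)}"

definition char_to_torus :: "nat \<Rightarrow> (nat \<Rightarrow> 'l) \<Rightarrow> ('l \<Rightarrow> 'k::field) \<Rightarrow> nat \<Rightarrow> 'k" where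
  "char_to_torus s v \<chi> = (\<lambda>i. if i < s then \<chi> (v i) else 1)"

definition symbol_eval :: "nat \<Rightarrow> (nat \<Rightarrow> 'l::ab_group_add) \<Rightarrow> ('l \<Rightarrow> 'k::field) \<Rightarrow> (nat \<Rightarrow> 'k) \<Rightarrow> 'k" where
  "symbol_eval s v a \<xi> = (\<Sum>x\<in>{x. a x \<noteq> 0}. a x * (\<Prod>i<s. \<xi> i powi (- coords s v x i)))"

definition Sigma_set :: "nat \<Rightarrow> (nat \<Rightarrow> 'l::ab_group_add) \<Rightarrow> ('l \<Rightarrow> 'k::field) list \<Rightarrow> (nat \<Rightarrow> 'k) set" where
  "Sigma_set s v as = {\<xi> \<in> torus s. \<forall>a\<in>set as. symbol_eval s v a \<xi> = 0}"

definition mu_set :: "nat \<Rightarrow> (nat \<Rightarrow> nat) \<Rightarrow> (nat \<Rightarrow> 'k::field) set" where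
  "mu_set s n = {\<xi>. (\<forall>i<s. \<xi> i ^ n i = 1) \<and> (\<forall>i\<ge>s. \<xi> i = 1)}"

definition sublat :: "nat \<Rightarrow> (nat \<Rightarrow> 'l::ab_group_add) \<Rightarrow> (nat \<Rightarrow> nat) \<Rightarrow> 'l set" where
  "sublat s v n = {x. \<exists>k::nat \<Rightarrow> int. x = (\<Sum>i<s. zsmul (k i * int (n i)) (v i))}"

text \<open>Elements of \<open>G\<close> are the cosets \<open>x + \<Lambda>'\<close>.\<close>
definition coset :: "'l::ab_group_add set \<Rightarrow> 'l \<Rightarrow> 'l set" where
  "coset L x = {y. y - x \<in> L}"

definition quot :: "'l::ab_group_add set \<Rightarrow> 'l set set" where
  "quot L = range (coset L)"

definition proj :: "'l::ab_group_add set \<Rightarrow> 'l \<Rightarrow> 'l set" where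
  "proj L = coset L"

definition cadd :: "'l::ab_group_add set \<Rightarrow> 'l set \<Rightarrow> 'l set" where
  "cadd c d = {x + y | x y. x \<in> c \<and> y \<in> d}"

definition cdiff :: "'l::ab_group_add set \<Rightarrow> 'l set \<Rightarrow> 'l set" where
  "cdiff c d = {x - y | x y. x \<in> c \<and> y \<in> d}"

text \<open>Functions on G are modelled as extensional functions on the set of cosets.\<close>
definition pushfwd :: "'l::ab_group_add set \<Rightarrow> ('l \<Rightarrow> 'k::comm_ring) \<Rightarrow> 'l set \<Rightarrow> 'k" where
  "pushfwd L a = (\<lambda>c\<in>quot L. \<Sum>x\<in>{x\<in>c. a x \<noteq> 0}. a x)"

definition convG :: "'l::ab_group_add set \<Rightarrow> ('l set \<Rightarrow> 'k::comm_ring) \<Rightarrow> ('l set \<Rightarrow> 'k) \<Rightarrow> 'l set \<Rightarrow> 'k" where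
  "convG L f b = (\<lambda>c\<in>quot L. \<Sum>h\<in>quot L. f h * b (cdiff c h))"

definition is_charG :: "'l::ab_group_add set \<Rightarrow> ('l set \<Rightarrow> 'k::field) \<Rightarrow> bool" where
  "is_charG L \<psi> \<longleftrightarrow> \<psi> \<in> extensional (quot L) \<and>
     (\<forall>c\<in>quot L. \<forall>d\<in>quot L. \<psi> (cadd c d) = \<psi> c * \<psi> d) \<and> (\<forall>c\<in>quot L. \<psi> c \<noteq> 0)"

definition harmonic_charsG :: "'l::ab_group_add set \<Rightarrow> ('l set \<Rightarrow> 'k::field) list \<Rightarrow> ('l set \<Rightarrow> 'k) set" where
  "harmonic_charsG L bs = {\<psi>. is_charG L \<psi> \<and> (\<forall>b\<in>set bs. \<forall>c\<in>quot L. convG L \<psi> b c = 0)}"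

definition fourierG :: "'l::ab_group_add set \<Rightarrow> ('l set \<Rightarrow> 'k::comm_ring) \<Rightarrow> ('l set \<Rightarrow> 'k) \<Rightarrow> 'k" where
  "fourierG L b \<psi> = (\<Sum>g\<in>quot L. b g * \<psi> g)"

definition V_set :: "'l::ab_group_add set \<Rightarrow> ('l set \<Rightarrow> 'k::field) list \<Rightarrow> ('l set \<Rightarrow> 'k) set" where
  "V_set L bs = {\<psi>. is_charG L \<psi> \<and> (\<forall>b\<in>set bs. fourierG L b \<psi> = 0)}"

definition periodic :: "'l::ab_group_add set \<Rightarrow> ('l \<Rightarrow> 'k) \<Rightarrow> bool" where
  "periodic L f \<longleftrightarrow> (\<forall>x y. y \<in> L \<longrightarrow> f (x + y) = f x)"

definition d_dim :: "('l::ab_group_add \<Rightarrow> 'k::field) list \<Rightarrow> 'l set \<Rightarrow> nat" where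
  "d_dim as L = vector_space.dim (\<lambda>(c::'k) (f::'l \<Rightarrow> 'k). (\<lambda>x. c * f x))
                  {f. periodic L f \<and> (\<forall>a\<in>set as. conv f a = 0)}"

end

theory Submission
  imports Defs
begin

text \<open>
  A character \<open>\<chi>\<close> of \<open>\<Lambda>\<close> is determined by the point \<open>(\<chi>(v\<^sub>1), \<dots>, \<chi>(v\<^sub>s))\<close> of the torus,
  and \<open>\<chi> * a = \<chi> \<cdot> (\<chi> * a)(0)\<close> with \<open>(\<chi> * a)(0)\<close> the symbol of \<open>a\<close> at that point; so harmonic
  characters are the points of \<open>\<Sigma>\<close>. A character is \<open>\<Lambda>\<^sub>n\<close>-periodic iff its point lies in \<open>\<mu>\<^sub>n\<close>,
  and the periodic characters are exactly the pull-backs of characters of \<open>G = \<Lambda>/\<Lambda>\<^sub>n\<close>,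
  pull-back turning convolution with \<open>a\<close> into convolution with \<open>a\<^sub>*\<close>. On the finite group,
  \<open>\<psi> * b = \<psi> \<cdot> b^(\<psi>\<^sup>-\<^sup>1)\<close>, so \<open>\<psi> \<mapsto> \<psi>\<^sup>-\<^sup>1\<close> maps harmonic characters onto \<open>V(a\<^sub>*)\<close>.

  For the dimension: as \<open>p \<nmid> n\<^sub>i\<close>, there are \<open>\<Prod> n\<^sub>i \<ge> |G|\<close> periodic characters. They are
  linearly independent (Dedekind) inside the space of periodic functions, which is spanned by
  the \<open>|G|\<close> coset indicators, so they form a basis of it. Finally, if a combination of
  characters is harmonic, again by independence only harmonic characters occur in it.
\<close>

lemma zsmul_0 [simp]: "zsmul 0 x = 0"
  by (simp add: zsmul_def)

lemma zsmul_1 [simp]: "zsmul 1 x = x"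
  by (simp add: zsmul_def)

lemma zsmul_plus1: "zsmul (k + 1) x = zsmul k x + x"
proof (cases "k \<ge> 0")
  case True
  then have "nat (k + 1) = Suc (nat k)" by simp
  with True show ?thesis by (simp add: zsmul_def)
next
  case False
  show ?thesis
  proof (cases "k = -1")
    case False': False
    with False have "nat (- k) = Suc (nat (- (k + 1)))" by simp
    with False False' show ?thesis by (simp add: zsmul_def)
  qed (simp add: zsmul_def)
qed

lemma zsmul_add: "zsmul (k + l) x = zsmul k x + zsmul l x"
proof (induction l rule: int_induct[where k = 0])
  case (step1 i)
  then show ?case
    using zsmul_plus1[of "k + i" x] zsmul_plus1[of i x] by (simp add: algebra_simps)
next
  case (step2 i)
  then show ?case
    using zsmul_plus1[of "k + (i - 1)" x] zsmul_plus1[of "i - 1" x] by (simp add: algebra_simps)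
qed simp

lemma zsmul_neg: "zsmul (- k) x = - zsmul k x"
  using zsmul_add[of k "- k" x] by (simp add: eq_neg_iff_add_eq_0 add.commute)

lemma zsmul_diff: "zsmul (k - l) x = zsmul k x - zsmul l x"
  using zsmul_add[of k "- l" x] zsmul_neg[of l x] by simp


section \<open>Characters and their linear independence\<close>

context
  fixes \<chi> :: "'l::ab_group_add \<Rightarrow> 'k::field"
  assumes \<chi>: "is_char \<chi>"
begin

lemma is_char_add: "\<chi> (x + y) = \<chi> x * \<chi> y"
  using \<chi> by (simp add: is_char_def)

lemma is_char_nonzero: "\<chi> x \<noteq> 0"
  using \<chi> by (simp add: is_char_def)

lemma is_char_zero: "\<chi> 0 = 1"
  using is_char_add[of 0 0] is_char_nonzero[of 0] by simp

lemma is_char_sum: "\<chi> (sum f A) = (\<Prod>i\<in>A. \<chi> (f i))"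
  by (induction A rule: infinite_finite_induct) (auto simp: is_char_zero is_char_add)

lemma is_char_zsmul: "\<chi> (zsmul k x) = \<chi> x powi k"
proof (induction k rule: int_induct[where k = 0])
  case (step1 i)
  then show ?case
    using is_char_nonzero[of x] by (simp add: zsmul_plus1 is_char_add power_int_add_1)
next
  case (step2 i)
  then show ?case
    using zsmul_plus1[of "i - 1" x] is_char_add[of "zsmul (i - 1) x" x] is_char_nonzero[of x]
    by (simp add: power_int_diff field_simps)
qed (simp add: is_char_zero)

end

interpretation fun_vs: vector_space "\<lambda>(c::'k::field) (f::'a \<Rightarrow> 'k) x. c * f x"
  by unfold_locales (auto simp: fun_eq_iff algebra_simps)

lemma sum_fun_apply: "(\<Sum>i\<in>A. f i) x = (\<Sum>i\<in>A. f i x)"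
  by (induction A rule: infinite_finite_induct) auto

lemma chars_linearly_independent:
  fixes S :: "('l::ab_group_add \<Rightarrow> 'k::field) set"
  assumes "finite S" "S \<subseteq> {\<chi>. is_char \<chi>}" "\<And>x. (\<Sum>\<chi>\<in>S. u \<chi> * \<chi> x) = 0"
  shows "\<forall>\<chi>\<in>S. u \<chi> = 0"
  using assms
proof (induction S arbitrary: u rule: finite_induct)
  case (insert \<chi>\<^sub>0 S)
  have \<chi>\<^sub>0: "is_char \<chi>\<^sub>0" and S: "S \<subseteq> {\<chi>. is_char \<chi>}" using insert.prems(1) by auto
  have rel: "(\<Sum>\<chi>\<in>S. u \<chi> * \<chi> x) = - (u \<chi>\<^sub>0 * \<chi>\<^sub>0 x)" for x
    using insert.prems(2)[of x] insert.hyps by (simp add: eq_neg_iff_add_eq_0 add.commute)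
  \<comment> \<open>subtracting \<open>\<chi>\<^sub>0 y\<close> times the relation at \<open>x\<close> from the one at \<open>x + y\<close> eliminates \<open>\<chi>\<^sub>0\<close>\<close>
  have shifted: "(\<Sum>\<chi>\<in>S. (u \<chi> * (\<chi> y - \<chi>\<^sub>0 y)) * \<chi> x) = 0" for x y
  proof -
    have "(\<Sum>\<chi>\<in>S. u \<chi> * \<chi> (x + y)) = (\<Sum>\<chi>\<in>S. u \<chi> * \<chi> x * \<chi> y)"
      using S by (intro sum.cong) (auto simp: is_char_add)
    then have "(\<Sum>\<chi>\<in>S. (u \<chi> * (\<chi> y - \<chi>\<^sub>0 y)) * \<chi> x)
        = (\<Sum>\<chi>\<in>S. u \<chi> * \<chi> (x + y)) - \<chi>\<^sub>0 y * (\<Sum>\<chi>\<in>S. u \<chi> * \<chi> x)"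
      by (simp add: sum_subtractf sum_distrib_left algebra_simps)
    also have "\<dots> = 0"
      by (simp only: rel) (simp add: is_char_add[OF \<chi>\<^sub>0] algebra_simps)
    finally show ?thesis .
  qed
  have uS: "\<forall>\<chi>\<in>S. u \<chi> = 0"
  proof
    fix \<chi> assume "\<chi> \<in> S"
    with insert.hyps have "\<chi> \<noteq> \<chi>\<^sub>0" by blast
    then obtain y where "\<chi> y \<noteq> \<chi>\<^sub>0 y" by blast
    with insert.IH[OF S shifted] \<open>\<chi> \<in> S\<close> show "u \<chi> = 0" by fastforce
  qed
  then have "u \<chi>\<^sub>0 = 0"
    using rel[of 0] by (simp add: is_char_zero[OF \<chi>\<^sub>0])
  with uS show ?case by simp
qed simp

lemma chars_independent: "fun_vs.independent {\<chi>::'l::ab_group_add \<Rightarrow> 'k::field. is_char \<chi>}"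
  unfolding fun_vs.independent_explicit_finite_subsets
  using chars_linearly_independent by (auto simp: fun_eq_iff sum_fun_apply)


section \<open>Convolution with characters\<close>

lemma conv_reindex: "conv f a g = (\<Sum>y | a y \<noteq> 0. f (g - y) * a y)"
  unfolding conv_def by (rule sum.reindex_bij_witness[where i = "\<lambda>y. g - y" and j = "\<lambda>h. g - h"]) auto

lemma conv_lincomb: "conv (\<lambda>x. \<Sum>i\<in>I. c i * f i x) a g = (\<Sum>i\<in>I. c i * conv (f i) a g)"
  unfolding conv_def by (simp add: sum_distrib_right sum_distrib_left mult.assoc sum.swap[of _ I])

lemma conv_char:
  assumes "is_char \<chi>"
  shows "conv \<chi> a g = \<chi> g * conv \<chi> a 0"
  unfolding conv_reindex sum_distrib_left
  by (intro sum.cong) (auto simp: is_char_add[OF assms, symmetric])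

lemma harmonic_char_iff:
  assumes "is_char \<chi>"
  shows "harmonic as \<chi> \<longleftrightarrow> (\<forall>a\<in>set as. conv \<chi> a 0 = 0)"
proof -
  have "conv \<chi> a = 0 \<longleftrightarrow> conv \<chi> a 0 = 0" for a
  proof
    assume "conv \<chi> a 0 = 0"
    show "conv \<chi> a = 0"
    proof
      fix g
      show "conv \<chi> a g = 0 g"
        using conv_char[OF assms, of a g] \<open>conv \<chi> a 0 = 0\<close> by simp
    qed
  qed simp
  then show ?thesis by (simp add: harmonic_def)
qed

lemma harmonic_lincomb_chars:
  assumes P: "finite P" "P \<subseteq> {\<chi>. is_char \<chi>}"
    and harm: "harmonic as (\<lambda>x. \<Sum>\<chi>\<in>P. u \<chi> * \<chi> x)"
    and \<chi>: "\<chi> \<in> P" "\<not> harmonic as \<chi>"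
  shows "u \<chi> = 0"
proof -
  obtain a where a: "a \<in> set as" "conv \<chi> a 0 \<noteq> 0"
    using \<chi> P(2) harmonic_char_iff by blast
  have "(\<Sum>\<psi>\<in>P. (u \<psi> * conv \<psi> a 0) * \<psi> x) = 0" for x
  proof -
    have "(\<Sum>\<psi>\<in>P. (u \<psi> * conv \<psi> a 0) * \<psi> x) = (\<Sum>\<psi>\<in>P. u \<psi> * conv \<psi> a x)"
      using P(2) by (intro sum.cong) (auto simp: conv_char[of _ a x])
    also have "\<dots> = conv (\<lambda>x. \<Sum>\<psi>\<in>P. u \<psi> * \<psi> x) a x"
      by (rule conv_lincomb[symmetric])
    also have "\<dots> = 0"
      using harm a(1) by (simp add: harmonic_def)
    finally show ?thesis .
  qed
  then have "u \<chi> * conv \<chi> a 0 = 0"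
    using chars_linearly_independent[OF P, of "\<lambda>\<psi>. u \<psi> * conv \<psi> a 0"] \<chi>(1) by blast
  with a(2) show ?thesis by simp
qed


section \<open>Subgroups, cosets and the quotient\<close>

definition add_subgroup :: "'a::ab_group_add set \<Rightarrow> bool" where
  "add_subgroup L \<longleftrightarrow> 0 \<in> L \<and> (\<forall>x\<in>L. \<forall>y\<in>L. x - y \<in> L)"

text \<open>Evaluates \<open>f\<close> at an arbitrary representative, so it is meaningful only for \<open>L\<close>-periodic \<open>f\<close>.\<close>
definition quot_fun :: "'a::ab_group_add set \<Rightarrow> ('a \<Rightarrow> 'b) \<Rightarrow> 'a set \<Rightarrow> 'b" where
  "quot_fun L f = (\<lambda>c\<in>quot L. f (SOME x. x \<in> c))"

definition inverse_charG :: "'a::ab_group_add set \<Rightarrow> ('a set \<Rightarrow> 'k::field) \<Rightarrow> 'a set \<Rightarrow> 'k" where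
  "inverse_charG L \<psi> = (\<lambda>c\<in>quot L. inverse (\<psi> c))"

lemma coset_in_quot [simp]: "coset L x \<in> quot L"
  by (simp add: quot_def)

context
  fixes L :: "'a::ab_group_add set"
  assumes L: "add_subgroup L"
begin

lemma add_subgroup_zero: "0 \<in> L"
  using L by (simp add: add_subgroup_def)

lemma add_subgroup_diff: "x \<in> L \<Longrightarrow> y \<in> L \<Longrightarrow> x - y \<in> L"
  using L by (simp add: add_subgroup_def)

lemma add_subgroup_add: "x \<in> L \<Longrightarrow> y \<in> L \<Longrightarrow> x + y \<in> L"
  using add_subgroup_diff[of x "- y"] add_subgroup_diff[OF add_subgroup_zero, of y] by simp

lemma coset_self: "x \<in> coset L x"
  using add_subgroup_zero by (simp add: coset_def)

lemma coset_eq_iff: "coset L x = coset L y \<longleftrightarrow> x - y \<in> L"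
proof
  assume "coset L x = coset L y"
  then show "x - y \<in> L" using coset_self[of x] by (simp add: coset_def)
next
  assume xy: "x - y \<in> L"
  have "z - y \<in> L \<longleftrightarrow> z - x \<in> L" for z
    using add_subgroup_add[OF _ xy, of "z - x"] add_subgroup_diff[OF _ xy, of "z - y"] by auto
  then show "coset L x = coset L y"
    by (auto simp: coset_def)
qed

lemma coset_eqI: "y \<in> coset L x \<Longrightarrow> coset L y = coset L x"
  using coset_eq_iff[of y x] by (simp add: coset_def)

lemma cadd_coset: "cadd (coset L x) (coset L y) = coset L (x + y)"
proof (rule set_eqI)
  fix z
  have "z \<in> cadd (coset L x) (coset L y)" if "z - (x + y) \<in> L"
    using that coset_self[of y] unfolding cadd_def coset_def
    by (intro CollectI exI[of _ "z - y"] exI[of _ y]) (simp add: algebra_simps)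
  moreover have "z - (x + y) \<in> L" if "z \<in> cadd (coset L x) (coset L y)"
  proof -
    from that obtain a b where "z = a + b" "a - x \<in> L" "b - y \<in> L"
      by (auto simp: cadd_def coset_def)
    then show ?thesis using add_subgroup_add[of "a - x" "b - y"] by (simp add: add_diff_add)
  qed
  ultimately show "z \<in> cadd (coset L x) (coset L y) \<longleftrightarrow> z \<in> coset L (x + y)"
    by (auto simp: coset_def)
qed

lemma cdiff_coset: "cdiff (coset L x) (coset L y) = coset L (x - y)"
proof (rule set_eqI)
  fix z
  have "z \<in> cdiff (coset L x) (coset L y)" if "z - (x - y) \<in> L"
    using that coset_self[of y] unfolding cdiff_def coset_def
    by (intro CollectI exI[of _ "z + y"] exI[of _ y]) (simp add: algebra_simps)
  moreover have "z - (x - y) \<in> L" if "z \<in> cdiff (coset L x) (coset L y)"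
  proof -
    from that obtain a b where ab: "z = a - b" "a - x \<in> L" "b - y \<in> L"
      by (auto simp: cdiff_def coset_def)
    then have "z - (x - y) = (a - x) - (b - y)" by (simp add: algebra_simps)
    then show ?thesis using add_subgroup_diff[OF ab(2,3)] by (simp only:)
  qed
  ultimately show "z \<in> cdiff (coset L x) (coset L y) \<longleftrightarrow> z \<in> coset L (x - y)"
    by (auto simp: coset_def)
qed

lemma quot_fun_coset:
  assumes "periodic L f"
  shows "quot_fun L f (coset L x) = f x"
proof -
  have "(SOME y. y \<in> coset L x) \<in> coset L x"
    using coset_self by (rule someI)
  then have "(SOME y. y \<in> coset L x) - x \<in> L"
    by (simp add: coset_def)
  with assms have "f (x + ((SOME y. y \<in> coset L x) - x)) = f x"
    unfolding periodic_def by blast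
  then show ?thesis by (simp add: quot_fun_def quot_def)
qed

lemma periodic_pullback: "periodic L (\<lambda>x. \<psi> (coset L x))"
  unfolding periodic_def by (metis add_diff_cancel_left' coset_eq_iff)

lemma quot_fun_pullback:
  assumes "\<psi> \<in> extensional (quot L)"
  shows "quot_fun L (\<lambda>x. \<psi> (coset L x)) = \<psi>"
proof (rule extensionalityI[OF _ assms])
  show "quot_fun L (\<lambda>x. \<psi> (coset L x)) \<in> extensional (quot L)"
    by (simp add: quot_fun_def)
  show "quot_fun L (\<lambda>x. \<psi> (coset L x)) c = \<psi> c" if "c \<in> quot L" for c
    using that quot_fun_coset[OF periodic_pullback] by (auto simp: quot_def)
qed

lemma is_char_pullback:
  assumes "is_charG L \<psi>"
  shows "is_char (\<lambda>x. \<psi> (coset L x))"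
  using assms unfolding is_char_def is_charG_def by (simp add: cadd_coset[symmetric])

lemma is_charG_quot_fun:
  assumes \<chi>: "is_char \<chi>" and per: "periodic L \<chi>"
  shows "is_charG L (quot_fun L \<chi>)"
  unfolding is_charG_def
proof (intro conjI ballI)
  show "quot_fun L \<chi> \<in> extensional (quot L)"
    by (simp add: quot_fun_def)
  fix c d assume "c \<in> quot L" "d \<in> quot L"
  then obtain x y where "c = coset L x" "d = coset L y"
    by (auto simp: quot_def)
  then show "quot_fun L \<chi> (cadd c d) = quot_fun L \<chi> c * quot_fun L \<chi> d"
    by (simp add: cadd_coset quot_fun_coset[OF per] is_char_add[OF \<chi>])
next
  fix c assume "c \<in> quot L"
  then obtain x where "c = coset L x"
    by (auto simp: quot_def)
  then show "quot_fun L \<chi> c \<noteq> 0"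
    by (simp add: quot_fun_coset[OF per] is_char_nonzero[OF \<chi>])
qed

lemma conv_pushfwd:
  assumes fin: "finite (quot L)" "fin_supp a"
  shows "conv (\<lambda>x. F (coset L x)) a g = convG L F (pushfwd L a) (coset L g)"
proof -
  let ?S = "{y. a y \<noteq> 0}"
  let ?c = "cdiff (coset L g)"
  have "finite ?S"
    using fin(2) by (simp add: fin_supp_def)
  have c_inv: "?c d \<in> quot L \<and> ?c (?c d) = d" if "d \<in> quot L" for d
    using that by (auto simp: quot_def cdiff_coset)
  have "convG L F (pushfwd L a) (coset L g) = (\<Sum>c\<in>quot L. F c * pushfwd L a (?c c))"
    by (simp add: convG_def)
  also have "\<dots> = (\<Sum>d\<in>quot L. F (?c d) * pushfwd L a d)"
    by (rule sum.reindex_bij_witness[where i = ?c and j = ?c]) (use c_inv in auto)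
  also have "\<dots> = (\<Sum>d\<in>quot L. \<Sum>y | y \<in> ?S \<and> coset L y = d. F (coset L (g - y)) * a y)"
  proof (intro sum.cong refl)
    fix d assume d: "d \<in> quot L"
    then have "{x \<in> d. a x \<noteq> 0} = {y. y \<in> ?S \<and> coset L y = d}"
      using coset_eqI coset_self by (auto simp: quot_def)
    with d have "F (?c d) * pushfwd L a d = (\<Sum>y | y \<in> ?S \<and> coset L y = d. F (?c d) * a y)"
      by (simp add: pushfwd_def sum_distrib_left)
    also have "\<dots> = (\<Sum>y | y \<in> ?S \<and> coset L y = d. F (coset L (g - y)) * a y)"
      by (intro sum.cong refl) (auto simp: cdiff_coset)
    finally show "F (?c d) * pushfwd L a d = \<dots>" .
  qed
  also have "\<dots> = (\<Sum>y\<in>?S. F (coset L (g - y)) * a y)"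
    by (rule sum.group[OF \<open>finite ?S\<close> fin(1)]) (auto simp: quot_def)
  also have "\<dots> = conv (\<lambda>x. F (coset L x)) a g"
    by (simp add: conv_reindex)
  finally show ?thesis by simp
qed

lemma harmonic_pullback_iff:
  assumes "finite (quot L)" "\<forall>a\<in>set as. fin_supp a"
  shows "harmonic as (\<lambda>x. \<psi> (coset L x)) \<longleftrightarrow>
    (\<forall>b\<in>set (map (pushfwd L) as). \<forall>c\<in>quot L. convG L \<psi> b c = 0)"
proof -
  have "conv (\<lambda>x. \<psi> (coset L x)) a = 0 \<longleftrightarrow> (\<forall>c\<in>quot L. convG L \<psi> (pushfwd L a) c = 0)"
    if "a \<in> set as" for a
    using conv_pushfwd[OF assms(1), of a \<psi>] that assms(2) by (auto simp: fun_eq_iff quot_def)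
  then show ?thesis
    by (auto simp: harmonic_def)
qed

lemma bij_betw_harmonic_charsG_periodic_chars:
  assumes "finite (quot L)" "\<forall>a\<in>set as. fin_supp a"
  shows "bij_betw (\<lambda>\<psi> x. \<psi> (coset L x)) (harmonic_charsG L (map (pushfwd L) as))
           {\<chi>. is_char \<chi> \<and> harmonic as \<chi> \<and> periodic L \<chi>}"
proof (rule bij_betw_byWitness[where f' = "quot_fun L"])
  show "\<forall>\<psi>\<in>harmonic_charsG L (map (pushfwd L) as). quot_fun L (\<lambda>x. \<psi> (coset L x)) = \<psi>"
    by (simp add: harmonic_charsG_def is_charG_def quot_fun_pullback)
  show "\<forall>\<chi>\<in>{\<chi>. is_char \<chi> \<and> harmonic as \<chi> \<and> periodic L \<chi>}. (\<lambda>x. quot_fun L \<chi> (coset L x)) = \<chi>"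
    by (simp add: quot_fun_coset)
  show "(\<lambda>\<psi> x. \<psi> (coset L x)) ` harmonic_charsG L (map (pushfwd L) as)
          \<subseteq> {\<chi>. is_char \<chi> \<and> harmonic as \<chi> \<and> periodic L \<chi>}"
    using is_char_pullback periodic_pullback harmonic_pullback_iff[OF assms]
    by (auto simp: harmonic_charsG_def)
  have "harmonic as (\<lambda>x. quot_fun L \<chi> (coset L x))" if "harmonic as \<chi>" "periodic L \<chi>" for \<chi>
    using that by (simp add: quot_fun_coset)
  then show "quot_fun L ` {\<chi>. is_char \<chi> \<and> harmonic as \<chi> \<and> periodic L \<chi>}
          \<subseteq> harmonic_charsG L (map (pushfwd L) as)"
    using is_charG_quot_fun harmonic_pullback_iff[OF assms] by (auto simp: harmonic_charsG_def)
qed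

lemma is_charG_inverse: "is_charG L \<psi> \<Longrightarrow> is_charG L (inverse_charG L \<psi>)"
  by (auto simp: is_charG_def inverse_charG_def quot_def cadd_coset)

lemma inverse_charG_inverse_charG: "\<psi> \<in> extensional (quot L) \<Longrightarrow> inverse_charG L (inverse_charG L \<psi>) = \<psi>"
  by (rule extensionalityI[of _ "quot L"]) (auto simp: inverse_charG_def)

lemma convG_charG:
  assumes \<psi>: "is_charG L \<psi>" and c: "c \<in> quot L"
  shows "convG L \<psi> b c = \<psi> c * fourierG L b (inverse_charG L \<psi>)"
proof -
  have c_inv: "cdiff c d \<in> quot L \<and> cdiff c (cdiff c d) = d" if "d \<in> quot L" for d
    using c that by (auto simp: quot_def cdiff_coset)
  have \<psi>_cdiff: "\<psi> (cdiff c d) = \<psi> c * inverse (\<psi> d)" if d: "d \<in> quot L" for d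
  proof -
    obtain x y where xy: "c = coset L x" "d = coset L y"
      using c d by (auto simp: quot_def)
    then have "\<psi> c = \<psi> (cadd (cdiff c d) d)"
      by (simp add: cdiff_coset cadd_coset)
    also have "\<dots> = \<psi> (cdiff c d) * \<psi> d"
      using \<psi> c_inv[OF d] d by (simp add: is_charG_def)
    finally show ?thesis
      using \<psi> d by (simp add: is_charG_def field_simps)
  qed
  have "convG L \<psi> b c = (\<Sum>d\<in>quot L. \<psi> d * b (cdiff c d))"
    using c by (simp add: convG_def)
  also have "\<dots> = (\<Sum>d\<in>quot L. \<psi> (cdiff c d) * b d)"
    by (rule sum.reindex_bij_witness[where i = "cdiff c" and j = "cdiff c"]) (use c_inv in auto)
  also have "\<dots> = \<psi> c * fourierG L b (inverse_charG L \<psi>)"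
    by (simp add: fourierG_def sum_distrib_left \<psi>_cdiff inverse_charG_def mult_ac)
  finally show ?thesis .
qed

lemma harmonic_charsG_iff:
  "\<psi> \<in> harmonic_charsG L bs \<longleftrightarrow> \<psi> \<in> extensional (quot L) \<and> inverse_charG L \<psi> \<in> V_set L bs"
proof
  assume h: "\<psi> \<in> harmonic_charsG L bs"
  then have \<psi>: "is_charG L \<psi>"
    by (simp add: harmonic_charsG_def)
  have "fourierG L b (inverse_charG L \<psi>) = 0" if "b \<in> set bs" for b
    using h that convG_charG[OF \<psi> coset_in_quot, of b 0] \<psi>
    by (auto simp: harmonic_charsG_def is_charG_def)
  moreover have "is_charG L (inverse_charG L \<psi>)"
    by (rule is_charG_inverse[OF \<psi>])
  moreover have "\<psi> \<in> extensional (quot L)"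
    using \<psi> by (simp add: is_charG_def)
  ultimately show "\<psi> \<in> extensional (quot L) \<and> inverse_charG L \<psi> \<in> V_set L bs"
    by (simp add: V_set_def)
next
  assume h: "\<psi> \<in> extensional (quot L) \<and> inverse_charG L \<psi> \<in> V_set L bs"
  then have "is_charG L (inverse_charG L \<psi>)"
    by (simp add: V_set_def)
  then have "is_charG L (inverse_charG L (inverse_charG L \<psi>))"
    by (rule is_charG_inverse)
  then have "is_charG L \<psi>"
    using h inverse_charG_inverse_charG by metis
  with h show "\<psi> \<in> harmonic_charsG L bs"
    by (simp add: harmonic_charsG_def V_set_def convG_charG)
qed

lemma bij_betw_harmonic_charsG_V_set:
  "bij_betw (inverse_charG L) (harmonic_charsG L bs) (V_set L bs)"
proof (rule bij_betw_byWitness[where f' = "inverse_charG L"])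
  have ext: "\<phi> \<in> extensional (quot L)" if "\<phi> \<in> V_set L bs" for \<phi>
    using that by (simp add: V_set_def is_charG_def)
  show "\<forall>\<psi>\<in>harmonic_charsG L bs. inverse_charG L (inverse_charG L \<psi>) = \<psi>"
    using harmonic_charsG_iff inverse_charG_inverse_charG by blast
  show "\<forall>\<phi>\<in>V_set L bs. inverse_charG L (inverse_charG L \<phi>) = \<phi>"
    using ext inverse_charG_inverse_charG by blast
  show "inverse_charG L ` harmonic_charsG L bs \<subseteq> V_set L bs"
    using harmonic_charsG_iff by blast
  show "inverse_charG L ` V_set L bs \<subseteq> harmonic_charsG L bs"
  proof
    fix \<psi> assume "\<psi> \<in> inverse_charG L ` V_set L bs"
    then obtain \<phi> where \<phi>: "\<phi> \<in> V_set L bs" "\<psi> = inverse_charG L \<phi>"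
      by blast
    have "\<psi> \<in> extensional (quot L)"
      using \<phi>(2) by (simp add: inverse_charG_def)
    moreover have "inverse_charG L \<psi> = \<phi>"
      unfolding \<phi>(2) by (rule inverse_charG_inverse_charG[OF ext[OF \<phi>(1)]])
    ultimately show "\<psi> \<in> harmonic_charsG L bs"
      using \<phi>(1) by (simp add: harmonic_charsG_iff)
  qed
qed

lemma periodic_in_span_indicators:
  assumes fin: "finite (quot L)" and f: "periodic L f"
  shows "f \<in> fun_vs.span ((\<lambda>c x. of_bool (x \<in> c)) ` quot L)"
proof -
  have "f = (\<Sum>c\<in>quot L. (\<lambda>x. quot_fun L f c * of_bool (x \<in> c)))"
  proof
    fix x
    have "(\<Sum>c\<in>quot L. (\<lambda>x. quot_fun L f c * of_bool (x \<in> c))) x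
        = (\<Sum>c\<in>quot L. if c = coset L x then quot_fun L f c else 0)"
      unfolding sum_fun_apply
      by (intro sum.cong refl) (auto simp: quot_def coset_eqI coset_self)
    also have "\<dots> = f x"
      using fin by (simp add: quot_fun_coset[OF f])
    finally show "f x = (\<Sum>c\<in>quot L. (\<lambda>x. quot_fun L f c * of_bool (x \<in> c))) x" ..
  qed
  also have "\<dots> \<in> fun_vs.span ((\<lambda>c x. of_bool (x \<in> c)) ` quot L)"
    by (intro fun_vs.span_sum fun_vs.span_scale fun_vs.span_base) auto
  finally show ?thesis .
qed

lemma periodic_in_span_periodic_chars:
  fixes P :: "('a \<Rightarrow> 'k::field) set"
  assumes fin: "finite (quot L)" "finite P"
    and P: "P \<subseteq> {\<chi>. is_char \<chi> \<and> periodic L \<chi>}" and card: "card (quot L) \<le> card P"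
    and f: "periodic L f"
  shows "f \<in> fun_vs.span P"
proof (rule ccontr)
  let ?I = "(\<lambda>c x. of_bool (x \<in> c) :: 'k) ` quot L"
  assume f_notin: "f \<notin> fun_vs.span P"
  \<comment> \<open>the periodic functions are spanned by \<open>card (quot L)\<close> indicators, and \<open>P\<close> is independent\<close>
  have indep: "fun_vs.independent (insert f P)"
    using fun_vs.independent_insertI[OF f_notin] fun_vs.independent_mono[OF chars_independent] P
    by blast
  have span_I: "insert f P \<subseteq> fun_vs.span ?I"
  proof
    fix g assume "g \<in> insert f P"
    then have "periodic L g"
      using P f by blast
    then show "g \<in> fun_vs.span ?I"
      by (rule periodic_in_span_indicators[OF fin(1)])
  qed
  have fin_I: "finite ?I"
    using fin(1) by simp
  have "card (insert f P) \<le> card ?I"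
    using fun_vs.independent_span_bound[OF fin_I indep span_I] by (rule conjunct2)
  also have "\<dots> \<le> card (quot L)"
    by (rule card_image_le[OF fin(1)])
  finally have "card (insert f P) \<le> card (quot L)" .
  moreover have "f \<notin> P"
    using f_notin fun_vs.span_base by blast
  ultimately show False
    using card fin(2) by simp
qed

lemma d_dim_eq_card_periodic_harmonic_chars:
  fixes as :: "('a \<Rightarrow> 'k::field) list"
  assumes fin: "finite (quot L)" "finite {\<chi>::'a \<Rightarrow> 'k. is_char \<chi> \<and> periodic L \<chi>}"
    and card: "card (quot L) \<le> card {\<chi>::'a \<Rightarrow> 'k. is_char \<chi> \<and> periodic L \<chi>}"
  shows "d_dim as L = card {\<chi>. is_char \<chi> \<and> harmonic as \<chi> \<and> periodic L \<chi>}"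
proof -
  define P where "P = {\<chi>::'a \<Rightarrow> 'k. is_char \<chi> \<and> periodic L \<chi>}"
  define B where "B = {\<chi>. is_char \<chi> \<and> harmonic as \<chi> \<and> periodic L \<chi>}"
  define W where "W = {f. periodic L f \<and> (\<forall>a\<in>set as. conv f a = 0)}"
  have "B \<subseteq> W"
    by (auto simp: B_def W_def harmonic_def)
  moreover have "W \<subseteq> fun_vs.span B"
  proof
    fix f assume f: "f \<in> W"
    then have "f \<in> fun_vs.span P"
      using periodic_in_span_periodic_chars[OF fin(1)] fin(2) card by (auto simp: P_def W_def)
    then obtain u where "f = (\<Sum>\<chi>\<in>P. (\<lambda>x. u \<chi> * \<chi> x))"
      using fun_vs.span_finite[OF fin(2)[folded P_def]] by auto
    then have u: "f = (\<lambda>x. \<Sum>\<chi>\<in>P. u \<chi> * \<chi> x)"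
      by (simp add: fun_eq_iff sum_fun_apply)
    have "u \<chi> = 0" if "\<chi> \<in> P - B" for \<chi>
      using harmonic_lincomb_chars[OF fin(2)[folded P_def], of as u \<chi>] f that u
      by (auto simp: P_def B_def W_def harmonic_def)
    then have "f = (\<lambda>x. \<Sum>\<chi>\<in>B. u \<chi> * \<chi> x)"
      unfolding u using fin(2) by (intro ext sum.mono_neutral_right) (auto simp: P_def B_def)
    also have "\<dots> \<in> fun_vs.span B"
      by (intro fun_vs.span_sum[unfolded sum_fun_apply] fun_vs.span_scale fun_vs.span_base)
    finally show "f \<in> fun_vs.span B" .
  qed
  moreover have "fun_vs.independent B"
    by (rule fun_vs.independent_mono[OF chars_independent]) (auto simp: B_def)
  ultimately have "fun_vs.dim W = card B"
    using fun_vs.dim_unique by blast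
  then show ?thesis
    by (simp add: d_dim_def W_def B_def)
qed

end


section \<open>Counting roots of unity\<close>

lemma card_roots_eq_degree:
  fixes q :: "'k::field poly"
  assumes alg_closed: "\<forall>q::'k poly. degree q > 0 \<longrightarrow> (\<exists>x. poly q x = 0)"
    and "q \<noteq> 0" and "\<forall>x. \<not> [:-x, 1:]^2 dvd q"
  shows "card {x. poly q x = 0} = degree q"
  using assms(2,3)
proof (induction "degree q" arbitrary: q)
  case 0
  then obtain c where "q = [:c:]"
    using degree_eq_zeroE by metis
  with 0 show ?case by simp
next
  case (Suc d)
  then obtain x where "poly q x = 0"
    using alg_closed by (metis zero_less_Suc)
  then obtain r where r: "q = [:-x, 1:] * r"
    using poly_eq_0_iff_dvd by (metis dvdE)
  with Suc.prems have "r \<noteq> 0" by auto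
  then have deg: "degree q = degree r + 1"
    using r degree_mult_eq[of "[:-x, 1:]" r] by simp
  have "poly r x \<noteq> 0"
  proof
    assume "poly r x = 0"
    then obtain t where "r = [:-x, 1:] * t"
      using poly_eq_0_iff_dvd by (metis dvdE)
    then have "q = [:-x, 1:]^2 * t"
      using r by (simp only: power2_eq_square mult.assoc)
    with Suc.prems(2) show False
      by (metis dvd_triv_left)
  qed
  moreover have "\<forall>y. \<not> [:-y, 1:]^2 dvd r"
    using Suc.prems(2) r by (meson dvd_mult2 dvd_trans dvd_triv_right)
  then have "card {y. poly r y = 0} = degree r"
    using Suc.hyps(1)[of r] deg Suc.hyps(2) \<open>r \<noteq> 0\<close> by simp
  moreover have "{y. poly q y = 0} = insert x {y. poly r y = 0}"
    using r \<open>poly q x = 0\<close> by auto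
  ultimately show ?case
    using poly_roots_finite[OF \<open>r \<noteq> 0\<close>] deg by simp
qed

lemma card_roots_of_unity:
  assumes alg_closed: "\<forall>q::'k::field poly. degree q > 0 \<longrightarrow> (\<exists>x. poly q x = 0)"
    and m: "0 < m" "of_nat m \<noteq> (0::'k)"
  shows "card {z::'k. z ^ m = 1} = m"
proof -
  define q :: "'k poly" where "q = monom 1 m + [:-1:]"
  have poly_q: "poly q z = z ^ m - 1" for z
    by (simp add: q_def poly_monom)
  have deg: "degree q = m"
    unfolding q_def using m(1) by (subst degree_add_eq_left) (auto simp: degree_monom_eq)
  \<comment> \<open>a double root would also be a root of \<open>pderiv q = m X\<^sup>m\<^sup>-\<^sup>1\<close>, which has none on the unit group\<close>
  have "\<not> [:-x, 1:]^2 dvd q" for x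
  proof
    assume "[:-x, 1:]^2 dvd q"
    then obtain r where r: "q = [:-x, 1:]^2 * r" ..
    then have "x ^ m = 1"
      using poly_q[of x] by simp
    with m(1) have "x \<noteq> 0"
      by (metis power_0_left zero_neq_one less_not_refl)
    have "pderiv q = [:-x, 1:]^2 * pderiv r + r * (smult (of_nat 2) [:-x, 1:] * pderiv [:-x, 1:])"
      unfolding r pderiv_mult using pderiv_power_Suc[of "[:-x, 1:]" 1] by (simp add: numeral_2_eq_2)
    then have "poly (pderiv q) x = 0"
      by simp
    moreover have "pderiv q = monom (of_nat m) (m - 1)"
      by (simp add: q_def pderiv_add pderiv_monom pderiv_pCons)
    ultimately show False
      using m(2) \<open>x \<noteq> 0\<close> by (simp add: poly_monom)
  qed
  moreover have "q \<noteq> 0"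
    using deg m(1) by auto
  ultimately have "card {z. poly q z = 0} = m"
    using card_roots_eq_degree[OF alg_closed] deg by simp
  then show ?thesis
    by (simp add: poly_q)
qed

lemma card_roots_of_unity_alg_closure:
  assumes K: "alg_closure_of_Fp p TYPE('k::field)" and m: "coprime m p"
  shows "card {z::'k. z ^ m = 1} = m"
proof -
  from K have p: "prime p" and char: "CHAR('k) = p"
    and alg_closed: "\<forall>q::'k poly. degree q > 0 \<longrightarrow> (\<exists>x. poly q x = 0)"
    by (auto simp: alg_closure_of_Fp_def)
  have "\<not> p dvd m"
    using m p by (metis coprime_common_divisor dvd_refl not_prime_unit)
  then have "of_nat m \<noteq> (0::'k)" and "0 < m"
    using char by (auto simp: of_nat_eq_0_iff_char_dvd intro: gr0I)
  then show ?thesis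
    using card_roots_of_unity[OF alg_closed] by blast
qed

lemma card_mu_set:
  assumes "\<forall>i<s. card {z::'k::field. z ^ n i = 1} = n i"
  shows "card (mu_set s n :: (nat \<Rightarrow> 'k) set) = (\<Prod>i<s. n i)"
proof -
  have "bij_betw (\<lambda>\<xi>. restrict \<xi> {..<s}) (mu_set s n :: (nat \<Rightarrow> 'k) set)
          (PiE {..<s} (\<lambda>i. {z::'k. z ^ n i = 1}))"
    by (rule bij_betw_byWitness[where f' = "\<lambda>\<eta> i. if i < s then \<eta> i else 1"])
      (auto simp: mu_set_def fun_eq_iff PiE_def extensional_def)
  then have "card (mu_set s n :: (nat \<Rightarrow> 'k) set) = card (PiE {..<s} (\<lambda>i. {z::'k. z ^ n i = 1}))"
    by (rule bij_betw_same_card)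
  also have "\<dots> = (\<Prod>i<s. n i)"
    using assms by (simp add: card_PiE)
  finally show ?thesis .
qed

section \<open>Characters of a lattice with a basis\<close>

definition torus_to_char :: "nat \<Rightarrow> (nat \<Rightarrow> 'l::ab_group_add) \<Rightarrow> (nat \<Rightarrow> 'k::field) \<Rightarrow> 'l \<Rightarrow> 'k" where
  "torus_to_char s v \<xi> x = (\<Prod>i<s. \<xi> i powi coords s v x i)"

lemma char_to_torus_in_torus: "is_char \<chi> \<Longrightarrow> char_to_torus s v \<chi> \<in> torus s"
  by (simp add: torus_def char_to_torus_def is_char_nonzero)

lemma bij_betw_restrict_to_preimage:
  assumes "bij_betw f {x. P x} B" "T \<subseteq> B" "\<And>x. P x \<Longrightarrow> Q x \<longleftrightarrow> f x \<in> T"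
  shows "bij_betw f {x. P x \<and> Q x} T"
proof -
  have "f ` {x. P x \<and> Q x} = T"
    using assms by (auto simp: bij_betw_def)
  with assms(1) show ?thesis
    by (auto intro: bij_betw_subset)
qed

lemma add_subgroup_sublat: "add_subgroup (sublat s v n)"
  unfolding add_subgroup_def sublat_def
proof (intro conjI ballI)
  show "0 \<in> {x. \<exists>k. x = (\<Sum>i<s. zsmul (k i * int (n i)) (v i))}"
    by (intro CollectI exI[of _ "\<lambda>_. 0"]) simp
  fix x y
  assume "x \<in> {x. \<exists>k. x = (\<Sum>i<s. zsmul (k i * int (n i)) (v i))}"
    and "y \<in> {x. \<exists>k. x = (\<Sum>i<s. zsmul (k i * int (n i)) (v i))}"
  then obtain k l where "x = (\<Sum>i<s. zsmul (k i * int (n i)) (v i))"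
    and "y = (\<Sum>i<s. zsmul (l i * int (n i)) (v i))"
    by blast
  then have "x - y = (\<Sum>i<s. zsmul ((k i - l i) * int (n i)) (v i))"
    by (simp add: sum_subtractf[symmetric] zsmul_diff[symmetric] left_diff_distrib)
  then show "x - y \<in> {x. \<exists>k. x = (\<Sum>i<s. zsmul (k i * int (n i)) (v i))}"
    by (auto intro!: exI[where x = "\<lambda>i. k i - l i"])
qed

lemma periodic_char_iff_mu_set:
  assumes \<chi>: "is_char \<chi>"
  shows "periodic (sublat s v n) \<chi> \<longleftrightarrow> char_to_torus s v \<chi> \<in> mu_set s n"
proof -
  have \<chi>_sublat: "\<chi> (\<Sum>i<s. zsmul (k i * int (n i)) (v i)) = (\<Prod>i<s. (\<chi> (v i) ^ n i) powi k i)" for k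
    by (simp add: is_char_sum[OF \<chi>] is_char_zsmul[OF \<chi>] power_int_mult mult.commute[of "k _"])
  show ?thesis
  proof
    assume per: "periodic (sublat s v n) \<chi>"
    have "\<chi> (v i) ^ n i = 1" if i: "i < s" for i
    proof -
      let ?k = "\<lambda>j. if j = i then 1 else 0 :: int"
      have "(\<Sum>j<s. zsmul (?k j * int (n j)) (v j)) \<in> sublat s v n"
        unfolding sublat_def by (intro CollectI exI[of _ ?k]) (rule refl)
      with per have "\<chi> (0 + (\<Sum>j<s. zsmul (?k j * int (n j)) (v j))) = \<chi> 0"
        unfolding periodic_def by blast
      then have "(\<Prod>j<s. (\<chi> (v j) ^ n j) powi ?k j) = 1"
        by (simp add: \<chi>_sublat is_char_zero[OF \<chi>] del: power_int_of_nat)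
      also have "(\<Prod>j<s. (\<chi> (v j) ^ n j) powi ?k j) = (\<Prod>j<s. if j = i then \<chi> (v j) ^ n j else 1)"
        by (intro prod.cong) auto
      finally show ?thesis
        using i by simp
    qed
    then show "char_to_torus s v \<chi> \<in> mu_set s n"
      by (simp add: mu_set_def char_to_torus_def)
  next
    assume mu: "char_to_torus s v \<chi> \<in> mu_set s n"
    have "\<chi> y = 1" if "y \<in> sublat s v n" for y
      using that mu unfolding sublat_def
      by (auto simp: \<chi>_sublat mu_set_def char_to_torus_def intro!: prod.neutral)
    then show "periodic (sublat s v n) \<chi>"
      by (simp add: periodic_def is_char_add[OF \<chi>])
  qed
qed

lemma mu_set_subset_torus: "\<forall>i<s. 0 < n i \<Longrightarrow> mu_set s n \<subseteq> torus s"
  by (auto simp: mu_set_def torus_def) (metis power_0_left zero_neq_one not_gr0)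

context
  fixes s :: nat and v :: "nat \<Rightarrow> 'l::ab_group_add"
  assumes basis: "is_lattice_basis s v"
begin

lemma coords_expansion: "(\<forall>i\<ge>s. coords s v x i = 0) \<and> x = (\<Sum>i<s. zsmul (coords s v x i) (v i))"
proof -
  have "\<exists>!\<alpha>::nat \<Rightarrow> int. (\<forall>i\<ge>s. \<alpha> i = 0) \<and> x = (\<Sum>i<s. zsmul (\<alpha> i) (v i))"
    using basis unfolding is_lattice_basis_def by blast
  from theI'[OF this] show ?thesis
    unfolding coords_def .
qed

lemma coords_unique:
  assumes "\<forall>i\<ge>s. \<alpha> i = 0" "x = (\<Sum>i<s. zsmul (\<alpha> i) (v i))"
  shows "coords s v x = \<alpha>"
  using basis assms coords_expansion[of x] unfolding is_lattice_basis_def by blast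

lemma coords_add: "coords s v (x + y) = (\<lambda>i. coords s v x i + coords s v y i)"
  using coords_expansion[of x] coords_expansion[of y]
  by (intro coords_unique) (auto simp: zsmul_add sum.distrib)

lemma coords_neg: "coords s v (- x) = (\<lambda>i. - coords s v x i)"
  using coords_expansion[of x] by (intro coords_unique) (auto simp: zsmul_neg sum_negf)

lemma coords_basis:
  assumes "i < s"
  shows "coords s v (v i) = (\<lambda>j. if j = i then 1 else 0)"
proof (rule coords_unique)
  have "(\<Sum>j<s. zsmul (if j = i then 1 else 0) (v j)) = (\<Sum>j<s. if j = i then v j else 0)"
    by (intro sum.cong) auto
  with assms show "v i = (\<Sum>j<s. zsmul (if j = i then 1 else 0) (v j))"
    by simp
qed (use assms in auto)

lemma is_char_eq_prod:
  assumes "is_char \<chi>"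
  shows "\<chi> x = (\<Prod>i<s. \<chi> (v i) powi coords s v x i)"
proof -
  have "\<chi> x = \<chi> (\<Sum>i<s. zsmul (coords s v x i) (v i))"
    using coords_expansion[of x] by simp
  also have "\<dots> = (\<Prod>i<s. \<chi> (v i) powi coords s v x i)"
    by (simp add: is_char_sum[OF assms] is_char_zsmul[OF assms])
  finally show ?thesis .
qed

lemma is_char_torus_to_char: "\<xi> \<in> torus s \<Longrightarrow> is_char (torus_to_char s v \<xi>)"
  unfolding is_char_def torus_to_char_def torus_def
  by (auto simp: coords_add power_int_add prod.distrib)

lemma char_to_torus_torus_to_char:
  assumes "\<xi> \<in> torus s"
  shows "char_to_torus s v (torus_to_char s v \<xi>) = \<xi>"
proof
  fix i
  show "char_to_torus s v (torus_to_char s v \<xi>) i = \<xi> i"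
  proof (cases "i < s")
    case True
    then have "torus_to_char s v \<xi> (v i) = (\<Prod>j<s. if j = i then \<xi> j else 1)"
      unfolding torus_to_char_def coords_basis[OF True] by (intro prod.cong) auto
    with True show ?thesis
      by (simp add: char_to_torus_def)
  next
    case False
    with assms show ?thesis
      by (simp add: char_to_torus_def torus_def)
  qed
qed

lemma torus_to_char_char_to_torus: "is_char \<chi> \<Longrightarrow> torus_to_char s v (char_to_torus s v \<chi>) = \<chi>"
  by (rule ext) (simp add: torus_to_char_def char_to_torus_def is_char_eq_prod[symmetric])

lemma bij_betw_char_to_torus: "bij_betw (char_to_torus s v) {\<chi>::'l \<Rightarrow> 'k::field. is_char \<chi>} (torus s)"
  by (rule bij_betw_byWitness[where f' = "torus_to_char s v"])
    (auto simp: torus_to_char_char_to_torus char_to_torus_torus_to_char is_char_torus_to_char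
      char_to_torus_in_torus intro: image_eqI)

lemma conv_char_zero_eq_symbol_eval:
  assumes "is_char \<chi>"
  shows "conv \<chi> a 0 = symbol_eval s v a (char_to_torus s v \<chi>)"
  unfolding conv_reindex symbol_eval_def
  by (intro sum.cong) (simp_all add: is_char_eq_prod[OF assms, of "- _"] coords_neg char_to_torus_def)

lemma harmonic_char_iff_Sigma_set:
  "is_char \<chi> \<Longrightarrow> harmonic as \<chi> \<longleftrightarrow> char_to_torus s v \<chi> \<in> Sigma_set s v as"
  by (simp add: harmonic_char_iff conv_char_zero_eq_symbol_eval Sigma_set_def char_to_torus_in_torus)

lemma bij_betw_char_to_torus_harmonic:
  "bij_betw (char_to_torus s v) {\<chi>::'l \<Rightarrow> 'k::field. is_char \<chi> \<and> harmonic as \<chi>} (Sigma_set s v as)"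
  by (rule bij_betw_restrict_to_preimage[OF bij_betw_char_to_torus])
    (auto simp: Sigma_set_def harmonic_char_iff_Sigma_set)

lemma quot_sublat_subset_reps:
  assumes n: "\<forall>i<s. 0 < n i"
  shows "quot (sublat s v n)
    \<subseteq> (\<lambda>r. coset (sublat s v n) (\<Sum>i<s. zsmul (int (r i)) (v i))) ` PiE {..<s} (\<lambda>i. {..<n i})"
proof -
  let ?L = "sublat s v n"
  \<comment> \<open>reduce the coordinates of a representative modulo \<open>n\<close>\<close>
  have "coset ?L x \<in> (\<lambda>r. coset ?L (\<Sum>i<s. zsmul (int (r i)) (v i))) ` PiE {..<s} (\<lambda>i. {..<n i})"
    for x
  proof -
    define \<alpha> where "\<alpha> = coords s v x"
    define r where "r = (\<lambda>i\<in>{..<s}. nat (\<alpha> i mod int (n i)))"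
    have r: "r \<in> PiE {..<s} (\<lambda>i. {..<n i})"
      using n unfolding r_def by (auto simp: nat_less_iff)
    have "x = (\<Sum>i<s. zsmul (\<alpha> i) (v i))"
      using coords_expansion[of x] unfolding \<alpha>_def by simp
    then have "x - (\<Sum>i<s. zsmul (int (r i)) (v i)) = (\<Sum>i<s. zsmul (\<alpha> i - int (r i)) (v i))"
      by (simp add: sum_subtractf[symmetric] zsmul_diff)
    also have "\<dots> = (\<Sum>i<s. zsmul ((\<alpha> i div int (n i)) * int (n i)) (v i))"
      using n by (intro sum.cong refl) (simp add: r_def minus_mod_eq_div_mult)
    finally have "x - (\<Sum>i<s. zsmul (int (r i)) (v i)) \<in> ?L"
      unfolding sublat_def by (auto intro!: exI[where x = "\<lambda>i. \<alpha> i div int (n i)"])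
    with r show ?thesis
      by (auto simp: coset_eq_iff[OF add_subgroup_sublat])
  qed
  then show ?thesis
    by (auto simp: quot_def)
qed

lemma finite_quot_sublat: "\<forall>i<s. 0 < n i \<Longrightarrow> finite (quot (sublat s v n))"
  by (rule finite_subset[OF quot_sublat_subset_reps]) (auto intro: finite_PiE)

lemma card_quot_sublat_le:
  assumes "\<forall>i<s. 0 < n i"
  shows "card (quot (sublat s v n)) \<le> (\<Prod>i<s. n i)"
proof -
  let ?R = "PiE {..<s} (\<lambda>i. {..<n i})"
  have fin_R: "finite ?R"
    by (simp add: finite_PiE)
  have "card (quot (sublat s v n))
      \<le> card ((\<lambda>r. coset (sublat s v n) (\<Sum>i<s. zsmul (int (r i)) (v i))) ` ?R)"
    by (rule card_mono[OF finite_imageI[OF fin_R] quot_sublat_subset_reps[OF assms]])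
  also have "\<dots> \<le> card ?R"
    by (rule card_image_le[OF fin_R])
  finally show ?thesis
    by (simp add: card_PiE)
qed

lemma bij_betw_char_to_torus_periodic:
  assumes "\<forall>i<s. 0 < n i"
  shows "bij_betw (char_to_torus s v) {\<chi>::'l \<Rightarrow> 'k::field. is_char \<chi> \<and> periodic (sublat s v n) \<chi>}
           (mu_set s n)"
  by (rule bij_betw_restrict_to_preimage[OF bij_betw_char_to_torus mu_set_subset_torus[OF assms]])
    (rule periodic_char_iff_mu_set)

lemma bij_betw_char_to_torus_periodic_harmonic:
  assumes "\<forall>i<s. 0 < n i"
  shows "bij_betw (char_to_torus s v)
           {\<chi>::'l \<Rightarrow> 'k::field. is_char \<chi> \<and> harmonic as \<chi> \<and> periodic (sublat s v n) \<chi>}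
           (Sigma_set s v as \<inter> mu_set s n)"
proof -
  have "Sigma_set s v as \<inter> mu_set s n \<subseteq> torus s"
    by (auto simp: Sigma_set_def)
  then show ?thesis
    by (rule bij_betw_restrict_to_preimage[OF bij_betw_char_to_torus])
      (simp add: periodic_char_iff_mu_set harmonic_char_iff_Sigma_set)
qed

lemma bij_betw_harmonic_charsG_Sigma_mu_set:
  assumes n: "\<forall>i<s. 0 < n i" and fin: "\<forall>a\<in>set as. fin_supp a"
  shows "bij_betw (\<lambda>\<psi>. char_to_torus s v (\<lambda>x. \<psi> (coset (sublat s v n) x)))
           (harmonic_charsG (sublat s v n) (map (pushfwd (sublat s v n)) as))
           (Sigma_set s v as \<inter> mu_set s n)"
  using bij_betw_trans[OF
      bij_betw_harmonic_charsG_periodic_chars[OF add_subgroup_sublat finite_quot_sublat[OF n] fin]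
      bij_betw_char_to_torus_periodic_harmonic[OF n]]
  by (simp add: comp_def)

lemma d_dim_sublat:
  fixes as :: "('l \<Rightarrow> 'k::field) list"
  assumes n: "\<forall>i<s. 0 < n i" and roots: "\<forall>i<s. card {z::'k. z ^ n i = 1} = n i"
  shows "d_dim as (sublat s v n) = card (Sigma_set s v as \<inter> mu_set s n)"
proof -
  let ?L = "sublat s v n"
  have card_P: "card {\<chi>::'l \<Rightarrow> 'k. is_char \<chi> \<and> periodic ?L \<chi>} = (\<Prod>i<s. n i)"
    using bij_betw_same_card[OF bij_betw_char_to_torus_periodic[OF n, where 'k = 'k]]
      card_mu_set[OF roots]
    by simp
  then have "finite {\<chi>::'l \<Rightarrow> 'k. is_char \<chi> \<and> periodic ?L \<chi>}"
    using n by (intro card_ge_0_finite) (simp add: prod_pos)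
  then have "d_dim as ?L = card {\<chi>. is_char \<chi> \<and> harmonic as \<chi> \<and> periodic ?L \<chi>}"
    using card_P card_quot_sublat_le[OF n]
    by (intro d_dim_eq_card_periodic_harmonic_chars[OF add_subgroup_sublat finite_quot_sublat[OF n]])
      simp_all
  also have "\<dots> = card (Sigma_set s v as \<inter> mu_set s n)"
    by (rule bij_betw_same_card[OF bij_betw_char_to_torus_periodic_harmonic[OF n]])
  finally show ?thesis .
qed

end

theorem proposition3p1:
  fixes p :: nat and s :: nat
    and v :: "nat \<Rightarrow> 'l::ab_group_add"
    and as :: "('l \<Rightarrow> 'k::field) list"
  assumes K: "alg_closure_of_Fp p TYPE('k)"
    and basis: "is_lattice_basis s v"
    and fin: "\<forall>a\<in>set as. fin_supp a"
  shows "bij_betw (char_to_torus s v) {\<chi>::'l \<Rightarrow> 'k. is_char \<chi>} (torus s)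
       \<and> bij_betw (char_to_torus s v) {\<chi>. is_char \<chi> \<and> harmonic as \<chi>} (Sigma_set s v as)
       \<and> (\<forall>n::nat \<Rightarrow> nat. (\<forall>i<s. 0 < n i \<and> coprime (n i) p) \<longrightarrow>
            (let L = sublat s v n; bs = map (pushfwd L) as in
              (\<exists>f. bij_betw f (Sigma_set s v as \<inter> mu_set s n) (harmonic_charsG L bs))
            \<and> (\<exists>g. bij_betw g (harmonic_charsG L bs) (V_set L bs))
            \<and> d_dim as L = card (V_set L bs)
            \<and> card (V_set L bs) = card (Sigma_set s v as \<inter> mu_set s n)))"
proof (intro conjI allI impI)
  show "bij_betw (char_to_torus s v) {\<chi>::'l \<Rightarrow> 'k. is_char \<chi>} (torus s)"
    by (rule bij_betw_char_to_torus[OF basis])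
  show "bij_betw (char_to_torus s v) {\<chi>::'l \<Rightarrow> 'k. is_char \<chi> \<and> harmonic as \<chi>} (Sigma_set s v as)"
    by (rule bij_betw_char_to_torus_harmonic[OF basis])
  fix n :: "nat \<Rightarrow> nat"
  assume n: "\<forall>i<s. 0 < n i \<and> coprime (n i) p"
  then have n_pos: "\<forall>i<s. 0 < n i" and roots: "\<forall>i<s. card {z::'k. z ^ n i = 1} = n i"
    using card_roots_of_unity_alg_closure[OF K] by auto
  define L where "L = sublat s v n"
  define bs where "bs = map (pushfwd L) as"
  have "bij_betw (\<lambda>\<psi>. char_to_torus s v (\<lambda>x. \<psi> (coset L x))) (harmonic_charsG L bs)
          (Sigma_set s v as \<inter> mu_set s n)"
    unfolding L_def bs_def by (rule bij_betw_harmonic_charsG_Sigma_mu_set[OF basis n_pos fin])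
  moreover have "bij_betw (inverse_charG L) (harmonic_charsG L bs) (V_set L bs)"
    unfolding L_def by (rule bij_betw_harmonic_charsG_V_set[OF add_subgroup_sublat])
  moreover have "d_dim as L = card (Sigma_set s v as \<inter> mu_set s n)"
    unfolding L_def by (rule d_dim_sublat[OF basis n_pos roots])
  ultimately show "let L = sublat s v n; bs = map (pushfwd L) as in
      (\<exists>f. bij_betw f (Sigma_set s v as \<inter> mu_set s n) (harmonic_charsG L bs))
    \<and> (\<exists>g. bij_betw g (harmonic_charsG L bs) (V_set L bs))
    \<and> d_dim as L = card (V_set L bs)
    \<and> card (V_set L bs) = card (Sigma_set s v as \<inter> mu_set s n)"
    unfolding Let_def L_def[symmetric] bs_def[symmetric]
    by (metis bij_betw_inv_into bij_betw_same_card)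
qed

end
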